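(* Run Alg-ABRD, either with its deterministic player selection or with the randomized-selection variant, using the Shapley cost sharing mechanism, and suppose the dynamic does not converge at any step. Let $p^{t_{\max}}$ be the last generated profile and $p^{t^*}$ a generated profile of minimum total cost. Then $C(p^{t_{\max}})\le\lceil\max_j\alpha_j\rceil\cdot\mathcal{H}_N\cdot C(p^{t^*})$, where $\mathcal{H}_N=\sum_{k=1}^N1/k$.
   Context: GND instance: finite resource set $E$; requests (players) $i \in [N]$, each with a reply collection $P_i \subseteq 2^E$ and a weight vector $w_i \in \mathbb{Z}_{\geq 1}^E$; constants $q \in \mathbb{Z}_{\ge 1}$, $\alpha_1,\dots,\alpha_q > 1$; for each $e$, $\sigma_e \geq 0$ and $\xi_{e,j} \geq 0$ (at least one positive), and $F_e(0)=0$, $F_e(l)=\sigma_e+\sum_j \xi_{e,j} l^{\alpha_j}$ for $l>0$. Profile $p\in P=P_1\times\dots\times P_N$; load $l_e^p=\sum_{i: e\in p_i} w_i(e)$; total cost $C(p)=\sum_e F_e(l_e^p)$; $(p'_i,p_{-i})$ is $p$ with coordinate $i$ replaced by $p'_i$. A reply $\varrho$-oracle ($\varrho \ge 1$), given a reply collection $R$ and tolls $\tau:E\to\mathbb{R}_{>0}$, returns $r \in R$ with $\sum_{e\in r}\tau(e) \le \varrho \sum_{e \in r'}\tau(e)$ for all $r'\in R$. Shapley cost sharing: with $S_e=\{i:e\in p_i\}$, for $e\in p_i$, $f_{i,e}(p)=\mathbb{E}\big[F_e\big(\sum_{i'\in S_e^i(\pi_e)}w_{i'}(e)+w_i(e)\big)-F_e\big(\sum_{i'\in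 S_e^i(\pi_e)}w_{i'}(e)\big)\big]$, $\pi_e$ a uniformly random permutation of $S_e$ and $S_e^i(\pi_e)$ the players preceding $i$; $f_{i,e}(p)=0$ if $e\notin p_i$. Individual cost $C_i(p)=\sum_e f_{i,e}(p)$. Alg-ABRD: fix small $\epsilon>0$ and $\epsilon_1=\frac{1+\epsilon}{1-\epsilon}$. Values $\widetilde f_{i,e}(p)$ are fixed with $(1-\epsilon) f_{i,e}(p) \le \widetilde f_{i,e}(p) \le (1+\epsilon) f_{i,e}(p)$, and $\widetilde C_i(p)=\sum_e \widetilde f_{i,e}(p)$. Initial $p^0$: $p^0_i$ is the oracle's output on $P_i$ with tolls $\tau_i^0(e)=F_e(w_i(e))$. At step $t\ge1$: for every $i$ compute $p'_i$ with $\widetilde C_i(p'_i,p^{t-1}_{-i}) \le \varrho\, \widetilde C_i(p''_i,p^{t-1}_{-i})$ for all $p''_i\in P_i$, and $\delta_i^t=\widetilde C_i(p^{t-1}) - \epsilon_1 \widetilde C_i(p'_i,p^{t-1}_{-i})$. If $\delta_i^t\le 0$ for all $i$ the dynamic converges (sets $p^t=p^{t-1}$ and stops). Otherwise, deterministic selection: pick $j$ with $\delta_j^t>0$ and $\delta_j^t\ge\frac1N\sum_i\delta_i^t$ and set $p^t=(p'_j,p^{t-1}_{-j})$; randomized selection: draw $i\in[N]$ uniformly at random and set $p^t=(p'_i,p^{t-1}_{-i})$ if $\delta_i^t>0$, else $p^t=p^{t-1}$. The run lasts a fixed finite number of steps. *)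

theory Defs
  imports Complex_Main "HOL-Combinatorics.Multiset_Permutations"
begin

text \<open>Players are 0,...,N-1; resources have type 'e (the resource set is E :: 'e set);
  a profile is a function p :: nat => 'e set (coordinate i = reply of player i).\<close>

type_synonym 'e profile = "nat \<Rightarrow> 'e set"

definition Fcost :: "nat \<Rightarrow> (nat \<Rightarrow> real) \<Rightarrow> ('e \<Rightarrow> real) \<Rightarrow> ('e \<Rightarrow> nat \<Rightarrow> real)
                      \<Rightarrow> 'e \<Rightarrow> real \<Rightarrow> real" where
  "Fcost q \<alpha> \<sigma> \<xi> e l = (if l = 0 then 0 else \<sigma> e + (\<Sum>j\<in>{1..q}. \<xi> e j * l powr \<alpha> j))"

definition load :: "nat \<Rightarrow> (nat \<Rightarrow> 'e \<Rightarrow> nat) \<Rightarrow> 'e profile \<Rightarrow> 'e \<Rightarrow> nat" where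
  "load N w p e = (\<Sum>i\<in>{i. i < N \<and> e \<in> p i}. w i e)"

definition total_cost :: "'e set \<Rightarrow> ('e \<Rightarrow> real \<Rightarrow> real) \<Rightarrow> nat \<Rightarrow> (nat \<Rightarrow> 'e \<Rightarrow> nat)
                          \<Rightarrow> 'e profile \<Rightarrow> real" where
  "total_cost E F N w p = (\<Sum>e\<in>E. F e (real (load N w p e)))"

definition users :: "nat \<Rightarrow> 'e profile \<Rightarrow> 'e \<Rightarrow> nat set" where
  "users N p e = {i. i < N \<and> e \<in> p i}"

definition preceding :: "nat list \<Rightarrow> nat \<Rightarrow> nat set" where
  "preceding xs i = set (takeWhile (\<lambda>x. x \<noteq> i) xs)"

text \<open>Shapley cost share f_{i,e}(p): expectation over a uniformly random permutation of S_e
  (= average over all permutations of S_e) of the marginal cost of player i.\<close>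
definition shapley_share :: "('e \<Rightarrow> real \<Rightarrow> real) \<Rightarrow> nat \<Rightarrow> (nat \<Rightarrow> 'e \<Rightarrow> nat)
                             \<Rightarrow> 'e profile \<Rightarrow> nat \<Rightarrow> 'e \<Rightarrow> real" where
  "shapley_share F N w p i e =
     (if e \<in> p i then
        (\<Sum>xs\<in>permutations_of_set (users N p e).
            F e (real (\<Sum>i'\<in>preceding xs i. w i' e) + real (w i e))
          - F e (real (\<Sum>i'\<in>preceding xs i. w i' e)))
        / real (card (permutations_of_set (users N p e)))
      else 0)"

definition GND_instance :: "'e set \<Rightarrow> nat \<Rightarrow> (nat \<Rightarrow> 'e set set) \<Rightarrow> (nat \<Rightarrow> 'e \<Rightarrow> nat)
     \<Rightarrow> nat \<Rightarrow> (nat \<Rightarrow> real) \<Rightarrow> ('e \<Rightarrow> real) \<Rightarrow> ('e \<Rightarrow> nat \<Rightarrow> real) \<Rightarrow> bool" where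
  "GND_instance E N P w q \<alpha> \<sigma> \<xi> \<longleftrightarrow>
     finite E \<and> N \<ge> 1 \<and> q \<ge> 1 \<and>
     (\<forall>i<N. P i \<subseteq> Pow E \<and> P i \<noteq> {}) \<and>
     (\<forall>i<N. \<forall>e\<in>E. w i e \<ge> 1) \<and>
     (\<forall>j\<in>{1..q}. \<alpha> j > 1) \<and>
     (\<forall>e\<in>E. \<sigma> e \<ge> 0 \<and> (\<forall>j\<in>{1..q}. \<xi> e j \<ge> 0) \<and> (\<sigma> e > 0 \<or> (\<exists>j\<in>{1..q}. \<xi> e j > 0)))"

definition is_profile :: "nat \<Rightarrow> (nat \<Rightarrow> 'e set set) \<Rightarrow> 'e profile \<Rightarrow> bool" where
  "is_profile N P p \<longleftrightarrow> (\<forall>i<N. p i \<in> P i)"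

text \<open>A run of Alg-ABRD of T steps with profiles ps 0, ..., ps T, computed replies br t i
  (at step t for player i), approximate costs Ct (Ct i p = sum_e ft_{i,e}(p)),
  oracle factor rho, eps1 = (1+eps)/(1-eps), selection rule deterministic (det = True)
  or randomized (det = False; any realization of the random draws), and such that
  the dynamic does not converge at any step 1..T.\<close>
definition ABRD_run_nonconv ::
  "'e set \<Rightarrow> nat \<Rightarrow> (nat \<Rightarrow> 'e set set) \<Rightarrow> ('e \<Rightarrow> real \<Rightarrow> real) \<Rightarrow> (nat \<Rightarrow> 'e \<Rightarrow> nat)
   \<Rightarrow> real \<Rightarrow> real \<Rightarrow> (nat \<Rightarrow> 'e profile \<Rightarrow> real) \<Rightarrow> bool
   \<Rightarrow> nat \<Rightarrow> (nat \<Rightarrow> 'e profile) \<Rightarrow> (nat \<Rightarrow> nat \<Rightarrow> 'e set) \<Rightarrow> bool" where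
  "ABRD_run_nonconv E N P F w \<rho> \<epsilon>1 Ct det T ps br \<longleftrightarrow>
     \<comment> \<open>initial profile: oracle output on P_i with tolls F_e(w_i(e))\<close>
     (\<forall>i<N. ps 0 i \<in> P i \<and>
        (\<forall>r'\<in>P i. (\<Sum>e\<in>ps 0 i. F e (real (w i e))) \<le> \<rho> * (\<Sum>e\<in>r'. F e (real (w i e))))) \<and>
     (\<forall>t\<in>{1..T}.
        \<comment> \<open>approximate best replies computed at step t\<close>
        (\<forall>i<N. br t i \<in> P i \<and>
           (\<forall>r\<in>P i. Ct i ((ps (t-1))(i := br t i)) \<le> \<rho> * Ct i ((ps (t-1))(i := r)))) \<and>
        (let \<delta> = (\<lambda>i. Ct i (ps (t-1)) - \<epsilon>1 * Ct i ((ps (t-1))(i := br t i))) in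
          \<comment> \<open>no convergence at step t\<close>
          (\<exists>i<N. \<delta> i > 0) \<and>
          (if det then
             (\<exists>j<N. \<delta> j > 0 \<and> \<delta> j \<ge> (1 / real N) * (\<Sum>i<N. \<delta> i) \<and>
                    ps t = (ps (t-1))(j := br t j))
           else
             (\<exists>i<N. ps t = (if \<delta> i > 0 then (ps (t-1))(i := br t i) else ps (t-1))))))"

end

theory Submission
  imports Defs "HOL-Analysis.Harmonic_Numbers"
begin

text \<open>For a resource \<open>e\<close>, Shapley cost sharing distributes \<open>F\<^sub>e\<close> among the users \<open>S\<^sub>e\<close> as the
  Shapley value of the cooperative game \<open>c\<^sub>e(T) = F\<^sub>e(\<Sum>\<^sub>i\<^sub>\<in>\<^sub>T w\<^sub>i(e))\<close>. By Hart and Mas-Colell the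
  Shapley value is the marginal contribution to a potential \<open>\<Phi>\<^sub>e\<close>, so \<open>\<Phi>(p) = \<Sum>\<^sub>e \<Phi>\<^sub>e(S\<^sub>e)\<close> is an
  exact potential of the game. A move of Alg-ABRD (under either selection rule) improves the
  approximate cost by the factor \<open>\<epsilon>\<^sub>1\<close>, hence strictly improves the true Shapley cost of the
  mover, so \<open>\<Phi>\<close> never increases along the run.
  Finally \<open>\<Phi>\<^sub>e \<le> \<H>\<^sub>N c\<^sub>e\<close> holds for every monotone \<open>c\<^sub>e\<close>, while the leave-one-out inequality
  \<open>(|A| - d) c\<^sub>e(A) \<le> \<Sum>\<^sub>j\<^sub>\<in>\<^sub>A c\<^sub>e(A - {j})\<close> for polynomial costs of degree at most
  \<open>d = \<lceil>max \<alpha>\<^sub>j\<rceil>\<close> gives \<open>c\<^sub>e \<le> d \<Phi>\<^sub>e\<close>. Hence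
  \<open>C(p\<^sup>T) \<le> d \<Phi>(p\<^sup>T) \<le> d \<Phi>(p\<^sup>t\<^sup>*) \<le> d \<H>\<^sub>N C(p\<^sup>t\<^sup>*)\<close>.\<close>

lemma sum_permutations_of_set_snoc:
  assumes "finite S" "S \<noteq> {}"
  shows "(\<Sum>xs\<in>permutations_of_set S. f xs) =
         (\<Sum>x\<in>S. \<Sum>ys\<in>permutations_of_set (S - {x}). f (ys @ [x]))"
proof -
  let ?D = "SIGMA x:S. permutations_of_set (S - {x})"
  have bij: "bij_betw (\<lambda>(x, ys). ys @ [x]) ?D (permutations_of_set S)"
  proof (rule bij_betwI')
    fix a b assume "a \<in> ?D" "b \<in> ?D"
    then show "((case a of (x, ys) \<Rightarrow> ys @ [x]) = (case b of (x, ys) \<Rightarrow> ys @ [x])) = (a = b)"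
      by (cases a; cases b) auto
  next
    fix a assume "a \<in> ?D"
    then show "(case a of (x, ys) \<Rightarrow> ys @ [x]) \<in> permutations_of_set S"
      by (cases a) (auto simp: permutations_of_set_def)
  next
    fix xs assume xs: "xs \<in> permutations_of_set S"
    then have "xs \<noteq> []" using assms by (auto simp: permutations_of_set_def)
    then obtain ys x where xs_eq: "xs = ys @ [x]" by (metis rev_exhaust)
    with xs have "(x, ys) \<in> ?D" by (auto simp: permutations_of_set_def)
    with xs_eq show "\<exists>a\<in>?D. xs = (case a of (x, ys) \<Rightarrow> ys @ [x])" by auto
  qed
  then have "(\<Sum>xs\<in>permutations_of_set S. f xs) = (\<Sum>(x, ys)\<in>?D. f (ys @ [x]))"
    using sum.reindex_bij_betw[OF bij, where g = f] by (simp add: case_prod_unfold)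
  also have "\<dots> = (\<Sum>x\<in>S. \<Sum>ys\<in>permutations_of_set (S - {x}). f (ys @ [x]))"
    using assms(1) by (subst sum.Sigma) auto
  finally show ?thesis .
qed

lemma preceding_snoc_self: "i \<notin> set ys \<Longrightarrow> preceding (ys @ [i]) i = set ys"
  unfolding preceding_def by (subst takeWhile_append2) auto

lemma preceding_snoc: "i \<in> set ys \<Longrightarrow> preceding (ys @ [x]) i = preceding ys i"
  unfolding preceding_def by (subst takeWhile_append1[of i]) auto

lemma not_in_preceding: "i \<notin> preceding xs i"
  unfolding preceding_def by (auto dest: set_takeWhileD)

lemma finite_preceding [simp]: "finite (preceding xs i)"
  by (simp add: preceding_def)

lemma sum_permutations_of_set_preceding:
  assumes "finite S" "i \<in> S"
  shows "(\<Sum>xs\<in>permutations_of_set S. g (preceding xs i)) =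
         fact (card S - 1) * g (S - {i}) +
         (\<Sum>x\<in>S - {i}. \<Sum>ys\<in>permutations_of_set (S - {x}). g (preceding ys i))"
proof -
  have last_i: "(\<Sum>ys\<in>permutations_of_set (S - {i}). g (preceding (ys @ [i]) i)) =
                fact (card S - 1) * g (S - {i})"
  proof -
    have "(\<Sum>ys\<in>permutations_of_set (S - {i}). g (preceding (ys @ [i]) i)) =
          (\<Sum>ys\<in>permutations_of_set (S - {i}). g (S - {i}))"
      by (rule sum.cong) (auto simp: permutations_of_set_def preceding_snoc_self)
    then show ?thesis
      using assms by simp
  qed
  have last_other: "(\<Sum>ys\<in>permutations_of_set (S - {x}). g (preceding (ys @ [x]) i)) =
                    (\<Sum>ys\<in>permutations_of_set (S - {x}). g (preceding ys i))"
    if "x \<in> S - {i}" for x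
    by (rule sum.cong) (use that assms in \<open>auto simp: permutations_of_set_def preceding_snoc\<close>)
  have "(\<Sum>xs\<in>permutations_of_set S. g (preceding xs i)) =
        (\<Sum>x\<in>S. \<Sum>ys\<in>permutations_of_set (S - {x}). g (preceding (ys @ [x]) i))"
    using assms by (intro sum_permutations_of_set_snoc) auto
  also have "\<dots> = (\<Sum>ys\<in>permutations_of_set (S - {i}). g (preceding (ys @ [i]) i)) +
       (\<Sum>x\<in>S - {i}. \<Sum>ys\<in>permutations_of_set (S - {x}). g (preceding (ys @ [x]) i))"
    using assms by (simp add: sum.remove)
  finally show ?thesis
    using last_i last_other by simp
qed

definition shapley_value :: "(nat set \<Rightarrow> real) \<Rightarrow> nat set \<Rightarrow> nat \<Rightarrow> real" where
  "shapley_value c S i =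
     (\<Sum>xs\<in>permutations_of_set S. c (insert i (preceding xs i)) - c (preceding xs i))
       / fact (card S)"

text \<open>\<open>hm_potential\<close> is the potential of Hart and Mas-Colell; the recursion runs with
  \<open>card S\<close> as fuel.\<close>

primrec potential_iter :: "('a set \<Rightarrow> real) \<Rightarrow> nat \<Rightarrow> 'a set \<Rightarrow> real" where
  "potential_iter c 0 S = 0"
| "potential_iter c (Suc m) S = (c S + (\<Sum>j\<in>S. potential_iter c m (S - {j}))) / real (card S)"

definition hm_potential :: "('a set \<Rightarrow> real) \<Rightarrow> 'a set \<Rightarrow> real" where
  "hm_potential c S = potential_iter c (card S) S"

lemma hm_potential_empty [simp]: "hm_potential c {} = 0"
  by (simp add: hm_potential_def)

lemma hm_potential_rec:
  assumes "c {} = 0" "finite S"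
  shows "real (card S) * hm_potential c S = c S + (\<Sum>j\<in>S. hm_potential c (S - {j}))"
proof (cases "S = {}")
  case False
  then obtain m where m: "card S = Suc m" using assms(2) by (cases "card S") auto
  have "(\<Sum>j\<in>S. potential_iter c m (S - {j})) = (\<Sum>j\<in>S. hm_potential c (S - {j}))"
    by (rule sum.cong) (use m assms(2) in \<open>auto simp: hm_potential_def\<close>)
  then show ?thesis using m by (simp add: hm_potential_def)
qed (use assms in simp)

lemma shapley_value_rec:
  assumes "finite S" "i \<in> S"
  shows "real (card S) * shapley_value c S i =
         c S - c (S - {i}) + (\<Sum>x\<in>S - {i}. shapley_value c (S - {x}) i)"
proof -
  define g where "g T = c (insert i T) - c T" for T
  define n where "n = card S - 1"
  have "card S > 0" using assms card_gt_0_iff by blast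
  then have card_S: "card S = Suc n" by (simp add: n_def)
  have sub_perms: "(\<Sum>ys\<in>permutations_of_set (S - {x}). g (preceding ys i)) =
                   fact n * shapley_value c (S - {x}) i" if "x \<in> S - {i}" for x
    using that assms card_S by (simp add: shapley_value_def g_def)
  have "(\<Sum>xs\<in>permutations_of_set S. g (preceding xs i)) =
        fact n * g (S - {i}) + (\<Sum>x\<in>S - {i}. fact n * shapley_value c (S - {x}) i)"
    using sum_permutations_of_set_preceding[OF assms, of g] sub_perms card_S by simp
  also have "\<dots> = fact n * (g (S - {i}) + (\<Sum>x\<in>S - {i}. shapley_value c (S - {x}) i))"
    by (simp add: distrib_left sum_distrib_left)
  finally have sum_eq: "(\<Sum>xs\<in>permutations_of_set S. g (preceding xs i)) = \<dots>" .
  have "real (card S) * shapley_value c S i =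
        real (Suc n) * (\<Sum>xs\<in>permutations_of_set S. g (preceding xs i)) / (real (Suc n) * fact n)"
    unfolding shapley_value_def card_S g_def by (simp only: fact_Suc of_nat_mult) simp
  also have "\<dots> = g (S - {i}) + (\<Sum>x\<in>S - {i}. shapley_value c (S - {x}) i)"
    unfolding sum_eq by simp
  finally show ?thesis
    using assms by (simp add: g_def insert_absorb)
qed

lemma shapley_value_eq_hm_potential_diff:
  assumes "c {} = 0" "finite S" "i \<in> S"
  shows "shapley_value c S i = hm_potential c S - hm_potential c (S - {i})"
  using assms(2,3)
proof (induction "card S" arbitrary: S rule: less_induct)
  case less
  have IH: "shapley_value c (S - {x}) i = hm_potential c (S - {x}) - hm_potential c (S - {i} - {x})"
    if "x \<in> S - {i}" for x
  proof -
    have "card (S - {x}) < card S" using that less.prems by (meson DiffD1 card_Diff1_less)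
    then show ?thesis
      using less.hyps[of "S - {x}"] that less.prems by (auto simp: Diff_insert2[symmetric] insert_commute)
  qed
  have n_pos: "real (card S) > 0" using less.prems card_gt_0_iff by fastforce
  have card_S_i: "real (card (S - {i})) = real (card S) - 1"
    using less.prems n_pos by (simp add: of_nat_diff)
  have pot_S: "real (card S) * hm_potential c S =
      c S + hm_potential c (S - {i}) + (\<Sum>j\<in>S - {i}. hm_potential c (S - {j}))"
    using hm_potential_rec[of c, OF assms(1) less.prems(1)] less.prems by (simp add: sum.remove)
  have pot_S_i: "(real (card S) - 1) * hm_potential c (S - {i}) =
      c (S - {i}) + (\<Sum>j\<in>S - {i}. hm_potential c (S - {i} - {j}))"
    using hm_potential_rec[of c, OF assms(1), of "S - {i}"] less.prems card_S_i by simp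
  have "real (card S) * shapley_value c S i =
        c S - c (S - {i}) + (\<Sum>x\<in>S - {i}. hm_potential c (S - {x})) -
        (\<Sum>x\<in>S - {i}. hm_potential c (S - {i} - {x}))"
    using shapley_value_rec[OF less.prems] IH by (simp add: sum_subtractf)
  also have "\<dots> = real (card S) * (hm_potential c S - hm_potential c (S - {i}))"
    using pot_S pot_S_i by (simp add: algebra_simps)
  finally show ?case using n_pos by simp
qed

lemma hm_potential_le_harm:
  assumes "c {} = 0" "\<And>A B. A \<subseteq> B \<Longrightarrow> B \<subseteq> U \<Longrightarrow> c A \<le> c B"
    and "finite S" "S \<subseteq> U"
  shows "hm_potential c S \<le> harm (card S) * c S"
  using assms(3,4)
proof (induction "card S" arbitrary: S rule: less_induct)
  case less
  show ?case
  proof (cases "S = {}")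
    case False
    define m where "m = card S - 1"
    have card_S: "card S = Suc m" using less.prems False by (simp add: m_def card_gt_0_iff)
    have "hm_potential c (S - {j}) \<le> harm m * c S" if j: "j \<in> S" for j
    proof -
      have card_S_j: "card (S - {j}) = m" using j less.prems card_S by simp
      have "hm_potential c (S - {j}) \<le> harm m * c (S - {j})"
        using less.hyps[of "S - {j}"] less.prems card_S card_S_j by auto
      also have "\<dots> \<le> harm m * c S"
        using assms(2)[of "S - {j}" S] less.prems by (intro mult_left_mono harm_nonneg) auto
      finally show ?thesis .
    qed
    then have "(\<Sum>j\<in>S. hm_potential c (S - {j})) \<le> real (card S) * harm m * c S"
      using sum_mono[of S "\<lambda>j. hm_potential c (S - {j})" "\<lambda>_. harm m * c S"] by simp
    then have "real (card S) * hm_potential c S \<le> c S + real (card S) * harm m * c S"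
      using hm_potential_rec[of c, OF assms(1) less.prems(1)] by simp
    also have "\<dots> = real (card S) * (harm (card S) * c S)"
      by (simp add: card_S harm_Suc field_simps del: of_nat_Suc)
    finally show ?thesis
      using card_S by (simp del: of_nat_Suc)
  qed (use assms(1) in simp)
qed

lemma le_hm_potential:
  assumes "c {} = 0" "d > 0"
    and leave_one_out: "\<And>A. A \<subseteq> U \<Longrightarrow> finite A \<Longrightarrow>
                           (real (card A) - d) * c A \<le> (\<Sum>j\<in>A. c (A - {j}))"
    and "finite S" "S \<subseteq> U"
  shows "c S \<le> d * hm_potential c S"
  using assms(4,5)
proof (induction "card S" arbitrary: S rule: less_induct)
  case less
  show ?case
  proof (cases "S = {}")
    case False
    have "c (S - {j}) \<le> d * hm_potential c (S - {j})" if "j \<in> S" for j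
      using less.hyps[of "S - {j}"] less.prems card_Diff1_less[OF less.prems(1) that] by auto
    then have "(\<Sum>j\<in>S. c (S - {j})) \<le> d * (\<Sum>j\<in>S. hm_potential c (S - {j}))"
      by (simp add: sum_distrib_left sum_mono)
    then have "real (card S) * c S \<le> real (card S) * (d * hm_potential c S)"
      using leave_one_out[OF less.prems(2,1)] hm_potential_rec[of c, OF assms(1) less.prems(1)]
      by (simp add: algebra_simps)
    then show ?thesis
      using less.prems False by (simp add: card_gt_0_iff)
  qed (use assms(1) in simp)
qed

lemma powr_diff_le_mean_value:
  fixes a b p :: real
  assumes "0 < a" "a \<le> b" "1 \<le> p"
  shows "b powr p - a powr p \<le> (b - a) * (p * b powr (p - 1))"
proof (cases "a = b")
  case False
  then have "a < b" using assms by simp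
  have "\<exists>z. a < z \<and> z < b \<and> b powr p - a powr p = (b - a) * (p * z powr (p - 1))"
    by (rule MVT2[OF \<open>a < b\<close>]) (use assms in \<open>auto intro: has_real_derivative_powr\<close>)
  then obtain z where z: "a < z" "z < b" "b powr p - a powr p = (b - a) * (p * z powr (p - 1))"
    by blast
  have "p * z powr (p - 1) \<le> p * b powr (p - 1)"
    using z assms by (intro mult_left_mono powr_mono2) auto
  then show ?thesis
    using z \<open>a < b\<close> by (simp add: mult_left_mono)
qed simp

lemma sum_leave_one_out_powr_ge:
  fixes x :: "'a \<Rightarrow> real" and p W :: real
  assumes "finite A" "W = (\<Sum>j\<in>A. x j)" "\<And>j. j \<in> A \<Longrightarrow> x j \<ge> 0"
    and "\<And>j. j \<in> A \<Longrightarrow> W - x j > 0" "1 \<le> p"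
  shows "(real (card A) - p) * W powr p \<le> (\<Sum>j\<in>A. (W - x j) powr p)"
proof (cases "A = {}")
  case False
  then obtain j0 where "j0 \<in> A" by blast
  then have W_pos: "W > 0" using assms(3,4)[of j0] by linarith
  have "W powr p - (W - x j) powr p \<le> x j * (p * W powr (p - 1))" if "j \<in> A" for j
    using powr_diff_le_mean_value[of "W - x j" W p] assms(3,4,5) that by simp
  then have "(\<Sum>j\<in>A. W powr p - (W - x j) powr p) \<le> (\<Sum>j\<in>A. x j * (p * W powr (p - 1)))"
    by (rule sum_mono)
  also have "\<dots> = W * (p * W powr (p - 1))"
    using assms(2) by (simp add: sum_distrib_right)
  also have "\<dots> = p * W powr p"
    using W_pos by (simp add: powr_diff)
  finally show ?thesis
    by (simp add: sum_subtractf left_diff_distrib)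
qed (use assms(5) in simp)

lemma Fcost_nonneg:
  assumes "\<sigma> e \<ge> 0" "\<forall>j\<in>{1..q}. \<xi> e j \<ge> 0"
  shows "Fcost q \<alpha> \<sigma> \<xi> e l \<ge> 0"
  using assms unfolding Fcost_def by (auto intro!: add_nonneg_nonneg sum_nonneg mult_nonneg_nonneg)

lemma Fcost_mono:
  assumes "\<sigma> e \<ge> 0" "\<forall>j\<in>{1..q}. \<xi> e j \<ge> 0" "\<forall>j\<in>{1..q}. \<alpha> j \<ge> 0"
    and "0 \<le> l" "l \<le> l'"
  shows "Fcost q \<alpha> \<sigma> \<xi> e l \<le> Fcost q \<alpha> \<sigma> \<xi> e l'"
proof (cases "l = 0")
  case True
  then show ?thesis using Fcost_nonneg[of \<sigma> e q \<xi> \<alpha> l'] assms(1,2) by (simp add: Fcost_def)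
next
  case False
  have "(\<Sum>j\<in>{1..q}. \<xi> e j * l powr \<alpha> j) \<le> (\<Sum>j\<in>{1..q}. \<xi> e j * l' powr \<alpha> j)"
    using assms by (intro sum_mono mult_left_mono powr_mono2) auto
  then show ?thesis using False assms(4,5) by (simp add: Fcost_def)
qed

text \<open>Positive loads keep \<open>Fcost\<close> away from its jump at \<open>0\<close>, where the fixed cost \<open>\<sigma> e\<close> is dropped.\<close>

lemma Fcost_leave_one_out_pos:
  fixes x :: "'a \<Rightarrow> real"
  assumes "\<sigma> e \<ge> 0" "\<forall>j\<in>{1..q}. \<xi> e j \<ge> 0" "\<forall>j\<in>{1..q}. 1 \<le> \<alpha> j \<and> \<alpha> j \<le> d" "0 \<le> d"
    and "finite A" "W = (\<Sum>j\<in>A. x j)" "\<And>j. j \<in> A \<Longrightarrow> x j \<ge> 0" "\<And>j. j \<in> A \<Longrightarrow> W - x j > 0"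
  shows "(real (card A) - d) * Fcost q \<alpha> \<sigma> \<xi> e W \<le> (\<Sum>j\<in>A. Fcost q \<alpha> \<sigma> \<xi> e (W - x j))"
proof (cases "A = {}")
  case False
  define n where "n = real (card A)"
  have "W > 0" using False assms(7,8) by fastforce
  then have F_W: "(n - d) * Fcost q \<alpha> \<sigma> \<xi> e W =
                  (n - d) * \<sigma> e + (\<Sum>k\<in>{1..q}. \<xi> e k * ((n - d) * W powr \<alpha> k))"
    by (simp add: Fcost_def algebra_simps sum_distrib_left)
  have "(\<Sum>j\<in>A. Fcost q \<alpha> \<sigma> \<xi> e (W - x j)) =
        (\<Sum>j\<in>A. \<sigma> e + (\<Sum>k\<in>{1..q}. \<xi> e k * (W - x j) powr \<alpha> k))"
    using assms(8) by (intro sum.cong) (auto simp: Fcost_def)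
  also have "\<dots> = n * \<sigma> e + (\<Sum>k\<in>{1..q}. \<xi> e k * (\<Sum>j\<in>A. (W - x j) powr \<alpha> k))"
    by (simp add: sum.distrib n_def sum_distrib_left sum.swap[of _ A])
  finally have F_leave_one_out: "(\<Sum>j\<in>A. Fcost q \<alpha> \<sigma> \<xi> e (W - x j)) = \<dots>" .
  have "(n - d) * \<sigma> e \<le> n * \<sigma> e"
    using assms(1,4) by (simp add: mult_right_mono)
  moreover have "(\<Sum>k\<in>{1..q}. \<xi> e k * ((n - d) * W powr \<alpha> k)) \<le>
                 (\<Sum>k\<in>{1..q}. \<xi> e k * (\<Sum>j\<in>A. (W - x j) powr \<alpha> k))"
  proof (intro sum_mono mult_left_mono)
    fix k assume k: "k \<in> {1..q}"
    have "(n - d) * W powr \<alpha> k \<le> (n - \<alpha> k) * W powr \<alpha> k"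
      using assms(3) k by (intro mult_right_mono) auto
    also have "\<dots> \<le> (\<Sum>j\<in>A. (W - x j) powr \<alpha> k)"
      unfolding n_def using assms(3,5-8) k by (intro sum_leave_one_out_powr_ge) auto
    finally show "(n - d) * W powr \<alpha> k \<le> (\<Sum>j\<in>A. (W - x j) powr \<alpha> k)" .
    show "\<xi> e k \<ge> 0" using assms(2) k by simp
  qed
  ultimately show ?thesis
    unfolding n_def[symmetric] F_W F_leave_one_out by linarith
qed (simp add: Fcost_def assms(6))

lemma Fcost_leave_one_out:
  fixes v :: "'a \<Rightarrow> nat"
  assumes "\<sigma> e \<ge> 0" "\<forall>j\<in>{1..q}. \<xi> e j \<ge> 0" "\<forall>j\<in>{1..q}. 1 \<le> \<alpha> j \<and> \<alpha> j \<le> d" "1 \<le> d"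
    and "finite A" "\<forall>i\<in>A. v i \<ge> 1"
  shows "(real (card A) - d) * Fcost q \<alpha> \<sigma> \<xi> e (real (\<Sum>i\<in>A. v i))
         \<le> (\<Sum>j\<in>A. Fcost q \<alpha> \<sigma> \<xi> e (real (\<Sum>i\<in>A - {j}. v i)))"
proof (cases "card A \<le> 1")
  case True
  then have "card A = 0 \<or> card A = 1" by linarith
  then consider "A = {}" | a where "A = {a}"
    using assms(5) card_1_singletonE by auto
  then show ?thesis
  proof cases
    case 2
    then show ?thesis
      using assms(4) Fcost_nonneg[of \<sigma> e q \<xi> \<alpha> "real (v a)"] assms(1,2)
      by (simp add: mult_nonpos_nonneg Fcost_def)
  qed (simp add: Fcost_def)
next
  case False
  have leave_one_out_eq: "(\<Sum>i\<in>A. real (v i)) - real (v j) = real (\<Sum>i\<in>A - {j}. v i)"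
    if "j \<in> A" for j
    using that assms(5) by (simp add: sum_diff1)
  have leave_one_out_pos: "real (\<Sum>i\<in>A - {j}. v i) > 0" if "j \<in> A" for j
  proof -
    have "card (A - {j}) \<ge> 1" using False that assms(5) by simp
    then have "A - {j} \<noteq> {}" by (intro notI) simp
    then obtain k where k: "k \<in> A - {j}" by blast
    then have "v k \<le> (\<Sum>i\<in>A - {j}. v i)" using assms(5) by (intro member_le_sum) auto
    moreover have "1 \<le> v k" using assms(6) k by auto
    ultimately have "(\<Sum>i\<in>A - {j}. v i) > 0" by linarith
    then show ?thesis by (simp only: of_nat_0_less_iff)
  qed
  have "(real (card A) - d) * Fcost q \<alpha> \<sigma> \<xi> e (\<Sum>i\<in>A. real (v i))
        \<le> (\<Sum>j\<in>A. Fcost q \<alpha> \<sigma> \<xi> e ((\<Sum>i\<in>A. real (v i)) - real (v j)))"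
    using assms(1-5) leave_one_out_pos leave_one_out_eq
    by (intro Fcost_leave_one_out_pos) auto
  also have "\<dots> = (\<Sum>j\<in>A. Fcost q \<alpha> \<sigma> \<xi> e (real (\<Sum>i\<in>A - {j}. v i)))"
    using leave_one_out_eq by simp
  finally show ?thesis by simp
qed

definition coalition_cost :: "('e \<Rightarrow> real \<Rightarrow> real) \<Rightarrow> (nat \<Rightarrow> 'e \<Rightarrow> nat) \<Rightarrow> 'e \<Rightarrow> nat set \<Rightarrow> real" where
  "coalition_cost F w e T = F e (real (\<Sum>i\<in>T. w i e))"

definition shapley_potential ::
  "'e set \<Rightarrow> ('e \<Rightarrow> real \<Rightarrow> real) \<Rightarrow> nat \<Rightarrow> (nat \<Rightarrow> 'e \<Rightarrow> nat) \<Rightarrow> 'e profile \<Rightarrow> real" where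
  "shapley_potential E F N w p = (\<Sum>e\<in>E. hm_potential (coalition_cost F w e) (users N p e))"

lemma total_cost_eq_sum_coalition_cost:
  "total_cost E F N w p = (\<Sum>e\<in>E. coalition_cost F w e (users N p e))"
  by (simp add: total_cost_def load_def users_def coalition_cost_def)

lemma card_users_le: "card (users N p e) \<le> N"
proof -
  have "card (users N p e) \<le> card {..<N}" by (intro card_mono) (auto simp: users_def)
  then show ?thesis by simp
qed

lemma shapley_share_eq_hm_potential_diff:
  assumes "F e 0 = 0" "i < N"
  shows "shapley_share F N w p i e =
         hm_potential (coalition_cost F w e) (users N p e) -
         hm_potential (coalition_cost F w e) (users N p e - {i})"
proof (cases "e \<in> p i")
  case True
  let ?c = "coalition_cost F w e" and ?U = "users N p e"
  have i_U: "i \<in> ?U" and fin_U: "finite ?U" using True assms(2) by (auto simp: users_def)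
  have "F e (real (\<Sum>i'\<in>preceding xs i. w i' e) + real (w i e)) -
        F e (real (\<Sum>i'\<in>preceding xs i. w i' e)) =
        ?c (insert i (preceding xs i)) - ?c (preceding xs i)" for xs
    by (simp add: coalition_cost_def not_in_preceding add.commute)
  then have "shapley_share F N w p i e = shapley_value ?c ?U i"
    using True fin_U by (simp add: shapley_share_def shapley_value_def)
  then show ?thesis
    using shapley_value_eq_hm_potential_diff[of ?c, OF _ fin_U i_U] assms(1)
    by (simp add: coalition_cost_def)
next
  case False
  then have "users N p e - {i} = users N p e" by (auto simp: users_def)
  then show ?thesis using False by (simp add: shapley_share_def)
qed

lemma shapley_potential_minus_share_update:
  assumes "\<And>e. F e 0 = 0" "i < N"
  shows "shapley_potential E F N w (p(i := r)) - (\<Sum>e\<in>E. shapley_share F N w (p(i := r)) i e) =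
         shapley_potential E F N w p - (\<Sum>e\<in>E. shapley_share F N w p i e)"
proof -
  have "users N (p(i := r)) e - {i} = users N p e - {i}" for e
    by (auto simp: users_def)
  then show ?thesis
    using assms
    by (simp add: shapley_potential_def shapley_share_eq_hm_potential_diff sum_subtractf[symmetric])
qed

lemma shapley_potential_le_harm_total_cost:
  assumes "GND_instance E N P w q \<alpha> \<sigma> \<xi>"
  shows "shapley_potential E (Fcost q \<alpha> \<sigma> \<xi>) N w p \<le> harm N * total_cost E (Fcost q \<alpha> \<sigma> \<xi>) N w p"
proof -
  let ?c = "coalition_cost (Fcost q \<alpha> \<sigma> \<xi>) w"
  have "hm_potential (?c e) (users N p e) \<le> harm N * ?c e (users N p e)" if e: "e \<in> E" for e
  proof -
    have F_e: "\<sigma> e \<ge> 0" "\<forall>j\<in>{1..q}. \<xi> e j \<ge> 0" "\<forall>j\<in>{1..q}. \<alpha> j \<ge> 0"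
      using assms e by (auto simp: GND_instance_def less_imp_le[OF less_trans[OF zero_less_one]])
    have "?c e A \<le> ?c e B" if "A \<subseteq> B" "B \<subseteq> {..<N}" for A B
      unfolding coalition_cost_def
      using that finite_subset[OF that(2)]
      by (intro Fcost_mono[of \<sigma> e q \<xi> \<alpha>, OF F_e] of_nat_mono sum_mono2) (auto intro: sum_nonneg)
    then have "hm_potential (?c e) (users N p e) \<le> harm (card (users N p e)) * ?c e (users N p e)"
      by (intro hm_potential_le_harm[where U = "{..<N}"])
         (auto simp: coalition_cost_def Fcost_def users_def)
    also have "\<dots> \<le> harm N * ?c e (users N p e)"
      unfolding coalition_cost_def using Fcost_nonneg[of \<sigma> e q \<xi>, OF F_e(1,2)]
      by (intro mult_right_mono harm_mono card_users_le) auto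
    finally show ?thesis .
  qed
  then show ?thesis
    unfolding shapley_potential_def total_cost_eq_sum_coalition_cost sum_distrib_left
    by (rule sum_mono)
qed

lemma total_cost_le_shapley_potential:
  assumes "GND_instance E N P w q \<alpha> \<sigma> \<xi>" "\<forall>j\<in>{1..q}. \<alpha> j \<le> d" "1 \<le> d"
  shows "total_cost E (Fcost q \<alpha> \<sigma> \<xi>) N w p \<le> d * shapley_potential E (Fcost q \<alpha> \<sigma> \<xi>) N w p"
proof -
  let ?c = "coalition_cost (Fcost q \<alpha> \<sigma> \<xi>) w"
  have "?c e (users N p e) \<le> d * hm_potential (?c e) (users N p e)" if e: "e \<in> E" for e
  proof (rule le_hm_potential[where U = "{..<N}"])
    show "(real (card A) - d) * ?c e A \<le> (\<Sum>j\<in>A. ?c e (A - {j}))" if "A \<subseteq> {..<N}" "finite A" for A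
      unfolding coalition_cost_def using assms e that
      by (intro Fcost_leave_one_out) (auto simp: GND_instance_def)
  qed (use assms(3) in \<open>auto simp: coalition_cost_def Fcost_def users_def\<close>)
  then show ?thesis
    unfolding shapley_potential_def total_cost_eq_sum_coalition_cost sum_distrib_left
    by (rule sum_mono)
qed

lemma le_of_int_ceiling_Max:
  fixes f :: "'a \<Rightarrow> real"
  assumes "finite A" "x \<in> A"
  shows "f x \<le> of_int \<lceil>Max (f ` A)\<rceil>"
  using assms Max_ge[of "f ` A" "f x"] le_of_int_ceiling order_trans by blast

lemma approx_improvement_imp_improvement:
  fixes \<epsilon> c c' ct ct' :: real
  assumes "0 < \<epsilon>" "\<epsilon> < 1" "ct \<le> (1 + \<epsilon>) * c" "(1 - \<epsilon>) * c' \<le> ct'"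
    and "ct - (1 + \<epsilon>) / (1 - \<epsilon>) * ct' > 0"
  shows "c' < c"
proof -
  have "(1 + \<epsilon>) * c' = (1 + \<epsilon>) / (1 - \<epsilon>) * ((1 - \<epsilon>) * c')"
    using assms(2) by simp
  also have "\<dots> \<le> (1 + \<epsilon>) / (1 - \<epsilon>) * ct'"
    using assms(1,2,4) by (intro mult_left_mono) auto
  finally have "(1 + \<epsilon>) * c' < (1 + \<epsilon>) * c"
    using assms(3,5) by linarith
  then show ?thesis using assms(1) by simp
qed

lemma shapley_potential_decreases_on_approx_improvement:
  fixes ft :: "'e \<Rightarrow> 'e profile \<Rightarrow> real"
  assumes "\<And>e. F e 0 = 0" "i < N" "0 < \<epsilon>" "\<epsilon> < 1"
    and approx: "\<And>p' e. p' \<in> {p, p(i := r)} \<Longrightarrow> e \<in> E \<Longrightarrow>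
           (1 - \<epsilon>) * shapley_share F N w p' i e \<le> ft e p' \<and>
           ft e p' \<le> (1 + \<epsilon>) * shapley_share F N w p' i e"
    and improves: "(\<Sum>e\<in>E. ft e p) - (1 + \<epsilon>) / (1 - \<epsilon>) * (\<Sum>e\<in>E. ft e (p(i := r))) > 0"
  shows "shapley_potential E F N w (p(i := r)) \<le> shapley_potential E F N w p"
proof -
  have "(\<Sum>e\<in>E. shapley_share F N w (p(i := r)) i e) < (\<Sum>e\<in>E. shapley_share F N w p i e)"
  proof (rule approx_improvement_imp_improvement[OF assms(3,4) _ _ improves])
    show "(\<Sum>e\<in>E. ft e p) \<le> (1 + \<epsilon>) * (\<Sum>e\<in>E. shapley_share F N w p i e)"
      unfolding sum_distrib_left using approx by (intro sum_mono) blast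
    show "(1 - \<epsilon>) * (\<Sum>e\<in>E. shapley_share F N w (p(i := r)) i e) \<le> (\<Sum>e\<in>E. ft e (p(i := r)))"
      unfolding sum_distrib_left using approx by (intro sum_mono) blast
  qed
  then show ?thesis
    using shapley_potential_minus_share_update[of F i N E w p r, OF assms(1,2)] by linarith
qed

lemma ABRD_run_step:
  assumes "ABRD_run_nonconv E N P F w \<rho> \<epsilon>1 Ct det T ps br" "t \<in> {1..T}"
  shows "ps t = ps (t - 1) \<or>
         (\<exists>i<N. br t i \<in> P i \<and> Ct i (ps (t - 1)) - \<epsilon>1 * Ct i ((ps (t - 1))(i := br t i)) > 0 \<and>
                ps t = (ps (t - 1))(i := br t i))"
proof -
  let ?\<delta> = "\<lambda>i. Ct i (ps (t - 1)) - \<epsilon>1 * Ct i ((ps (t - 1))(i := br t i))"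
  have br: "\<forall>i<N. br t i \<in> P i"
    using assms unfolding ABRD_run_nonconv_def by blast
  have "if det then \<exists>j<N. ?\<delta> j > 0 \<and> ps t = (ps (t - 1))(j := br t j)
        else \<exists>i<N. ps t = (if ?\<delta> i > 0 then (ps (t - 1))(i := br t i) else ps (t - 1))"
    using assms unfolding ABRD_run_nonconv_def Let_def by (cases det) auto
  then show ?thesis
    using br by (cases det) (auto split: if_splits)
qed

lemma ABRD_run_is_profile:
  assumes run: "ABRD_run_nonconv E N P F w \<rho> \<epsilon>1 Ct det T ps br" and "t \<le> T"
  shows "is_profile N P (ps t)"
  using assms(2)
proof (induction t)
  case 0
  then show ?case using run by (simp add: ABRD_run_nonconv_def is_profile_def)
next
  case (Suc t)
  then have "is_profile N P (ps t)" by simp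
  then show ?case
    using ABRD_run_step[OF run, of "Suc t"] Suc.prems by (auto simp: is_profile_def)
qed

lemma ABRD_run_potential_antimono:
  assumes run: "ABRD_run_nonconv E N P F w \<rho> \<epsilon>1 Ct det T ps br"
    and decreases: "\<And>p i r. is_profile N P p \<Longrightarrow> i < N \<Longrightarrow> r \<in> P i \<Longrightarrow>
                      Ct i p - \<epsilon>1 * Ct i (p(i := r)) > 0 \<Longrightarrow> \<Phi> (p(i := r)) \<le> \<Phi> p"
    and "s \<le> t" "t \<le> T"
  shows "\<Phi> (ps t) \<le> (\<Phi> (ps s) :: real)"
  using assms(3,4)
proof (induction t rule: dec_induct)
  case (step t)
  have "\<Phi> (ps (Suc t)) \<le> \<Phi> (ps t)"
    using ABRD_run_step[OF run, of "Suc t"] step.prems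
      decreases[OF ABRD_run_is_profile[OF run, of t]] by fastforce
  then show ?case using step by simp
qed simp

theorem theorem9p4:
  fixes E :: "'e set" and N :: nat and P :: "nat \<Rightarrow> 'e set set" and w :: "nat \<Rightarrow> 'e \<Rightarrow> nat"
    and q :: nat and \<alpha> :: "nat \<Rightarrow> real" and \<sigma> :: "'e \<Rightarrow> real" and \<xi> :: "'e \<Rightarrow> nat \<Rightarrow> real"
    and \<rho> \<epsilon> :: real and ft :: "nat \<Rightarrow> 'e \<Rightarrow> 'e profile \<Rightarrow> real" and det :: bool
    and T tstar :: nat and ps :: "nat \<Rightarrow> 'e profile" and br :: "nat \<Rightarrow> nat \<Rightarrow> 'e set"
  defines "F \<equiv> Fcost q \<alpha> \<sigma> \<xi>"
  defines "C \<equiv> total_cost E F N w"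
  defines "Ct \<equiv> (\<lambda>i p. \<Sum>e\<in>E. ft i e p)"
  assumes inst: "GND_instance E N P w q \<alpha> \<sigma> \<xi>"
    and rho: "\<rho> \<ge> 1"
    and eps: "0 < \<epsilon>" "\<epsilon> < 1"
    and ft_approx: "\<And>p i e. is_profile N P p \<Longrightarrow> i < N \<Longrightarrow> e \<in> E \<Longrightarrow>
         (1 - \<epsilon>) * shapley_share F N w p i e \<le> ft i e p \<and>
         ft i e p \<le> (1 + \<epsilon>) * shapley_share F N w p i e"
    and run: "ABRD_run_nonconv E N P F w \<rho> ((1 + \<epsilon>) / (1 - \<epsilon>)) Ct det T ps br"
    and tstar: "tstar \<le> T" "\<And>t. t \<le> T \<Longrightarrow> C (ps tstar) \<le> C (ps t)"
  shows "C (ps T) \<le> real_of_int \<lceil>Max (\<alpha> ` {1..q})\<rceil> * (\<Sum>k=1..N. 1 / real k) * C (ps tstar)"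
proof -
  define d where "d = real_of_int \<lceil>Max (\<alpha> ` {1..q})\<rceil>"
  have q: "q \<ge> 1" "\<forall>j\<in>{1..q}. \<alpha> j > 1" using inst by (auto simp: GND_instance_def)
  have d_ge: "\<forall>j\<in>{1..q}. \<alpha> j \<le> d"
    unfolding d_def by (blast intro: le_of_int_ceiling_Max)
  then have "1 \<le> d" using q by force
  let ?\<Phi> = "shapley_potential E F N w"
  have "?\<Phi> (ps T) \<le> ?\<Phi> (ps tstar)"
  proof (rule ABRD_run_potential_antimono[OF run _ tstar(1) order_refl])
    fix p i r assume p: "is_profile N P p" and i: "i < N" and "r \<in> P i"
      and improves: "Ct i p - (1 + \<epsilon>) / (1 - \<epsilon>) * Ct i (p(i := r)) > 0"
    then have "is_profile N P (p(i := r))" by (simp add: is_profile_def)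
    then show "?\<Phi> (p(i := r)) \<le> ?\<Phi> p"
      using eps improves i p ft_approx unfolding Ct_def
      by (intro shapley_potential_decreases_on_approx_improvement[where ft = "ft i"])
         (simp_all add: F_def Fcost_def, blast)
  qed
  have "C (ps T) \<le> d * ?\<Phi> (ps T)"
    unfolding C_def F_def using inst d_ge \<open>1 \<le> d\<close> by (rule total_cost_le_shapley_potential)
  also have "\<dots> \<le> d * ?\<Phi> (ps tstar)"
    using \<open>?\<Phi> (ps T) \<le> ?\<Phi> (ps tstar)\<close> \<open>1 \<le> d\<close> by simp
  also have "\<dots> \<le> d * (harm N * C (ps tstar))"
    unfolding C_def F_def using shapley_potential_le_harm_total_cost[OF inst] \<open>1 \<le> d\<close> by simp
  finally show ?thesis
    by (simp add: d_def harm_def inverse_eq_divide mult.assoc)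
qed

end
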